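(* Let $\mathcal{L},\mathcal{M}$ be matroids with $E(\mathcal{L})\cap E(\mathcal{M})=\{g\}$, $g$ neither a loop nor a coloop in either, and $\mathcal{N}=\mathcal{L}\oplus_g\mathcal{M}$. (a) With $N=Z(\mathbf{B}\mathcal{N};\mathbf{y})$, $L=Z(\mathbf{B}\mathcal{L};\mathbf{y})$, $M=Z(\mathbf{B}\mathcal{M};\mathbf{y})$: $N=L^gM_g+L_gM^g$. (b) With $N=Z(\mathbf{I}\mathcal{N};\mathbf{y})$, $L=Z(\mathbf{I}\mathcal{L};\mathbf{y})$, $M=Z(\mathbf{I}\mathcal{M};\mathbf{y})$: $N=L^gM_g+L_gM^g-L_gM_g$. (c) With $N=Z(\mathbf{S}\mathcal{N};\mathbf{y})$, $L=Z(\mathbf{S}\mathcal{L};\mathbf{y})$, $M=Z(\mathbf{S}\mathcal{M};\mathbf{y})$: $N=L^gM_g+L_gM^g-L^gM^g$.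
   Context: For a family $\mathcal{Q}$ of subsets of a finite set, $Z(\mathcal{Q};\mathbf{y})=\sum_{S\in\mathcal{Q}}\prod_{e\in S}y_e$; $\mathbf{B}\mathcal{M},\mathbf{I}\mathcal{M},\mathbf{S}\mathcal{M}$ are the sets of bases, independent sets and spanning sets of $\mathcal{M}$. For such a polynomial $P$, $P^g=P|_{y_g=0}$ and $P_g=\partial P/\partial y_g$. Two-sum: $\mathcal{N}$ is the matroid on $E(\mathcal{L})\cup E(\mathcal{M})\setminus\{g\}$ with $\mathrm{rank}_{\mathcal{N}}(S)=\mathrm{rank}_{\mathcal{L}}(S\cap E(\mathcal{L}))+\mathrm{rank}_{\mathcal{M}}(S\cap E(\mathcal{M}))-\nu(S)$, where $\nu(S)=1$ if $g$ is in the $\mathcal{L}$-closure of $S\cap E(\mathcal{L})$ and in the $\mathcal{M}$-closure of $S\cap E(\mathcal{M})$, and $\nu(S)=0$ otherwise. *)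

theory Defs
  imports "HOL-Analysis.Analysis"
begin

definition matroid :: "'a set \<Rightarrow> ('a set \<Rightarrow> bool) \<Rightarrow> bool" where
  "matroid E I \<longleftrightarrow> finite E \<and> (\<forall>X. I X \<longrightarrow> X \<subseteq> E) \<and> I {} \<and>
     (\<forall>X Y. I Y \<and> X \<subseteq> Y \<longrightarrow> I X) \<and>
     (\<forall>X Y. I X \<and> I Y \<and> card X < card Y \<longrightarrow> (\<exists>e\<in>Y - X. I (insert e X)))"

definition mrank :: "('a set \<Rightarrow> bool) \<Rightarrow> 'a set \<Rightarrow> nat" where
  "mrank I X = Max {card Y | Y. Y \<subseteq> X \<and> I Y}"

definition mclosure :: "'a set \<Rightarrow> ('a set \<Rightarrow> bool) \<Rightarrow> 'a set \<Rightarrow> 'a set" where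
  "mclosure E I X = {e \<in> E. mrank I (insert e X) = mrank I X}"

definition indeps :: "'a set \<Rightarrow> ('a set \<Rightarrow> bool) \<Rightarrow> 'a set set" where
  "indeps E I = {X. X \<subseteq> E \<and> I X}"

definition bases :: "'a set \<Rightarrow> ('a set \<Rightarrow> bool) \<Rightarrow> 'a set set" where
  "bases E I = {B. B \<subseteq> E \<and> I B \<and> (\<forall>X. X \<subseteq> E \<and> I X \<and> B \<subseteq> X \<longrightarrow> X = B)}"

definition spanning :: "'a set \<Rightarrow> ('a set \<Rightarrow> bool) \<Rightarrow> 'a set set" where
  "spanning E I = {S. S \<subseteq> E \<and> mrank I S = mrank I E}"

definition is_loop :: "('a set \<Rightarrow> bool) \<Rightarrow> 'a \<Rightarrow> bool" where
  "is_loop I g \<longleftrightarrow> \<not> I {g}"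

definition is_coloop :: "'a set \<Rightarrow> ('a set \<Rightarrow> bool) \<Rightarrow> 'a \<Rightarrow> bool" where
  "is_coloop E I g \<longleftrightarrow> (\<forall>B\<in>bases E I. g \<in> B)"

text \<open>Two-sum N = L (+)_g M, described by its ground set and rank function.\<close>
definition tsum_ground :: "'a set \<Rightarrow> 'a set \<Rightarrow> 'a \<Rightarrow> 'a set" where
  "tsum_ground EL EM g = (EL \<union> EM) - {g}"

definition tsum_nu :: "'a set \<Rightarrow> ('a set \<Rightarrow> bool) \<Rightarrow> 'a set \<Rightarrow> ('a set \<Rightarrow> bool) \<Rightarrow> 'a \<Rightarrow> 'a set \<Rightarrow> nat" where
  "tsum_nu EL IL EM IM g S =
     (if g \<in> mclosure EL IL (S \<inter> EL) \<and> g \<in> mclosure EM IM (S \<inter> EM) then 1 else 0)"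

definition tsum_rank :: "'a set \<Rightarrow> ('a set \<Rightarrow> bool) \<Rightarrow> 'a set \<Rightarrow> ('a set \<Rightarrow> bool) \<Rightarrow> 'a \<Rightarrow> 'a set \<Rightarrow> nat" where
  "tsum_rank EL IL EM IM g S =
     mrank IL (S \<inter> EL) + mrank IM (S \<inter> EM) - tsum_nu EL IL EM IM g S"

definition tsum_indeps :: "'a set \<Rightarrow> ('a set \<Rightarrow> bool) \<Rightarrow> 'a set \<Rightarrow> ('a set \<Rightarrow> bool) \<Rightarrow> 'a \<Rightarrow> 'a set set" where
  "tsum_indeps EL IL EM IM g =
     {S. S \<subseteq> tsum_ground EL EM g \<and> tsum_rank EL IL EM IM g S = card S}"

definition tsum_bases :: "'a set \<Rightarrow> ('a set \<Rightarrow> bool) \<Rightarrow> 'a set \<Rightarrow> ('a set \<Rightarrow> bool) \<Rightarrow> 'a \<Rightarrow> 'a set set" where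
  "tsum_bases EL IL EM IM g =
     {B. B \<in> tsum_indeps EL IL EM IM g \<and>
         (\<forall>X \<in> tsum_indeps EL IL EM IM g. B \<subseteq> X \<longrightarrow> X = B)}"

definition tsum_spanning :: "'a set \<Rightarrow> ('a set \<Rightarrow> bool) \<Rightarrow> 'a set \<Rightarrow> ('a set \<Rightarrow> bool) \<Rightarrow> 'a \<Rightarrow> 'a set set" where
  "tsum_spanning EL IL EM IM g =
     {S. S \<subseteq> tsum_ground EL EM g \<and>
         tsum_rank EL IL EM IM g S = tsum_rank EL IL EM IM g (tsum_ground EL EM g)}"

definition Zgen :: "'a set set \<Rightarrow> ('a \<Rightarrow> real) \<Rightarrow> real" where
  "Zgen Q y = (\<Sum>S\<in>Q. \<Prod>e\<in>S. y e)"

text \<open>P^g = P with y_g := 0; P_g = partial derivative of P in y_g.\<close>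
definition set_zero :: "'a \<Rightarrow> (('a \<Rightarrow> real) \<Rightarrow> real) \<Rightarrow> ('a \<Rightarrow> real) \<Rightarrow> real" where
  "set_zero g P y = P (y(g := 0))"

definition partial :: "'a \<Rightarrow> (('a \<Rightarrow> real) \<Rightarrow> real) \<Rightarrow> ('a \<Rightarrow> real) \<Rightarrow> real" where
  "partial g P y = deriv (\<lambda>t. P (y(g := t))) (y g)"

end

theory Submission
  imports Defs
begin

text \<open>
  Every subset of the ground set of \<open>N\<close> splits uniquely as \<open>A \<union> B\<close> with \<open>A \<subseteq> E(L) - g\<close>
  and \<open>B \<subseteq> E(M) - g\<close>, and its rank is \<open>r\<^sub>L(A) + r\<^sub>M(B) - \<nu>\<close>. Reading off this formula,
  \<open>A \<union> B\<close> is independent (spanning, a basis) in \<open>N\<close> exactly when \<open>A\<close> and \<open>B + g\<close>, or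
  \<open>A + g\<close> and \<open>B\<close>, are independent (spanning, bases) in \<open>L\<close> and \<open>M\<close>. As \<open>Z(Q) = Q\<^sup>g + y\<^sub>g Q\<^sub>g\<close>,
  where \<open>Q\<^sup>g\<close> counts the members avoiding \<open>g\<close> and \<open>Q\<^sub>g\<close> the members through \<open>g\<close> with \<open>g\<close>
  removed, inclusion-exclusion over these two cases gives \<open>L\<^sup>g M\<^sub>g + L\<^sub>g M\<^sup>g\<close> minus the product of
  the generating functions of the sets \<open>A\<close> with both \<open>A\<close> and \<open>A + g\<close> in the family. For bases
  there are no such sets; for independent sets (closed downwards) they are counted by \<open>L\<^sub>g\<close>, for
  spanning sets (closed upwards) by \<open>L\<^sup>g\<close>.
\<close>

section \<open>Rank, independent sets, bases and spanning sets of a matroid\<close>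

lemma matroid_finite: "matroid E I \<Longrightarrow> finite E"
  unfolding matroid_def by blast

lemma matroid_indep_subset: "matroid E I \<Longrightarrow> I X \<Longrightarrow> X \<subseteq> E"
  unfolding matroid_def by blast

lemma matroid_indep_finite: "matroid E I \<Longrightarrow> I X \<Longrightarrow> finite X"
  using matroid_finite matroid_indep_subset finite_subset by metis

lemma matroid_indep_mono: "matroid E I \<Longrightarrow> I Y \<Longrightarrow> X \<subseteq> Y \<Longrightarrow> I X"
  unfolding matroid_def by blast

lemma matroid_augment:
  "matroid E I \<Longrightarrow> I X \<Longrightarrow> I Y \<Longrightarrow> card X < card Y \<Longrightarrow> \<exists>e\<in>Y - X. I (insert e X)"
  unfolding matroid_def by blast

lemma mrank_cards_finite:
  assumes "matroid E I"
  shows "finite {card Y | Y. Y \<subseteq> X \<and> I Y}"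
proof -
  have "{card Y | Y. Y \<subseteq> X \<and> I Y} \<subseteq> card ` Pow E"
    using matroid_indep_subset[OF assms] by blast
  then show ?thesis using matroid_finite[OF assms] by (meson finite_Pow_iff finite_imageI finite_subset)
qed

lemma mrank_ge_card:
  assumes "matroid E I" "Y \<subseteq> X" "I Y"
  shows "card Y \<le> mrank I X"
  unfolding mrank_def using mrank_cards_finite[OF assms(1)] assms(2,3) by (intro Max_ge) auto

lemma obtain_mrank_witness:
  assumes "matroid E I"
  obtains Y where "Y \<subseteq> X" "I Y" "card Y = mrank I X"
proof -
  have "I {}" using assms unfolding matroid_def by blast
  then have "mrank I X \<in> {card Y | Y. Y \<subseteq> X \<and> I Y}"
    unfolding mrank_def by (intro Max_in mrank_cards_finite[OF assms]) blast
  then show ?thesis using that by auto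
qed

lemma mrank_mono:
  assumes "matroid E I" "X \<subseteq> X'"
  shows "mrank I X \<le> mrank I X'"
proof -
  obtain Y where "Y \<subseteq> X" "I Y" "card Y = mrank I X"
    using obtain_mrank_witness[OF assms(1)] .
  with assms show ?thesis using mrank_ge_card[OF assms(1), of Y X'] by simp
qed

lemma mrank_le_card:
  assumes "matroid E I" "finite X"
  shows "mrank I X \<le> card X"
proof -
  obtain Y where "Y \<subseteq> X" "I Y" "card Y = mrank I X"
    using obtain_mrank_witness[OF assms(1)] .
  with assms(2) show ?thesis using card_mono by metis
qed

lemma mrank_insert_le:
  assumes "matroid E I"
  shows "mrank I (insert e X) \<le> Suc (mrank I X)"
proof -
  obtain Y where Y: "Y \<subseteq> insert e X" "I Y" "card Y = mrank I (insert e X)"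
    using obtain_mrank_witness[OF assms] by blast
  have "card Y \<le> Suc (card (Y - {e}))"
    using matroid_indep_finite[OF assms Y(2)] by (cases "e \<in> Y") (auto simp: card_Diff_singleton)
  moreover have "card (Y - {e}) \<le> mrank I X"
    using Y matroid_indep_mono[OF assms Y(2), of "Y - {e}"] by (intro mrank_ge_card[OF assms]) auto
  ultimately show ?thesis using Y(3) by linarith
qed

lemma indep_iff_mrank_eq_card:
  assumes "matroid E I" "finite X"
  shows "I X \<longleftrightarrow> mrank I X = card X"
proof
  assume "I X"
  then show "mrank I X = card X"
    using mrank_ge_card[OF assms(1) order_refl] mrank_le_card[OF assms] le_antisym by blast
next
  assume "mrank I X = card X"
  moreover obtain Y where "Y \<subseteq> X" "I Y" "card Y = mrank I X"
    using obtain_mrank_witness[OF assms(1)] by blast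
  ultimately show "I X" using card_subset_eq[OF assms(2)] by metis
qed

lemma indep_extend_to_mrank:
  assumes "matroid E I" "I X" "X \<subseteq> Y"
  shows "\<exists>Z. X \<subseteq> Z \<and> Z \<subseteq> Y \<and> I Z \<and> card Z = mrank I Y"
  using assms(2,3)
proof (induction "mrank I Y - card X" arbitrary: X rule: less_induct)
  case less
  show ?case
  proof (cases "card X < mrank I Y")
    case False
    then show ?thesis
      using mrank_ge_card[OF assms(1) less.prems(2,1)] less.prems by (intro exI[of _ X]) auto
  next
    case True
    obtain W where W: "W \<subseteq> Y" "I W" "card W = mrank I Y"
      using obtain_mrank_witness[OF assms(1)] by blast
    then obtain e where e: "e \<in> W - X" "I (insert e X)"
      using matroid_augment[OF assms(1) less.prems(1), of W] True by auto
    have "card (insert e X) = Suc (card X)"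
      using e matroid_indep_finite[OF assms(1) less.prems(1)] by simp
    then have lt: "mrank I Y - card (insert e X) < mrank I Y - card X" using True by simp
    have sub: "insert e X \<subseteq> Y" using e W less.prems by blast
    from less.hyps[OF lt e(2) sub] show ?thesis by blast
  qed
qed

lemma bases_iff_card:
  assumes "matroid E I"
  shows "B \<in> bases E I \<longleftrightarrow> B \<subseteq> E \<and> I B \<and> card B = mrank I E"
proof
  assume B: "B \<in> bases E I"
  then have "B \<subseteq> E" "I B" unfolding bases_def by auto
  then obtain Z where Z: "B \<subseteq> Z" "Z \<subseteq> E" "I Z" "card Z = mrank I E"
    using indep_extend_to_mrank[OF assms, of B E] by blast
  then have "Z = B" using B unfolding bases_def by blast
  with Z \<open>I B\<close> show "B \<subseteq> E \<and> I B \<and> card B = mrank I E" by blast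
next
  assume B: "B \<subseteq> E \<and> I B \<and> card B = mrank I E"
  have "X = B" if X: "X \<subseteq> E" "I X" "B \<subseteq> X" for X
  proof -
    have "card X \<le> card B" using mrank_ge_card[OF assms X(1,2)] B by simp
    then have "B = X" by (rule card_seteq[OF matroid_indep_finite[OF assms X(2)] X(3)])
    then show ?thesis by simp
  qed
  with B show "B \<in> bases E I" unfolding bases_def by auto
qed

lemma indep_extend_to_basis:
  assumes "matroid E I" "I X" "X \<subseteq> Y" "Y \<subseteq> E" "mrank I Y = mrank I E"
  shows "\<exists>B\<in>bases E I. X \<subseteq> B \<and> B \<subseteq> Y"
proof -
  obtain Z where Z: "X \<subseteq> Z" "Z \<subseteq> Y" "I Z" "card Z = mrank I E"
    using indep_extend_to_mrank[OF assms(1-3)] assms(5) by auto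
  then have "Z \<in> bases E I" unfolding bases_iff_card[OF assms(1)] using assms(4) by blast
  with Z show ?thesis by blast
qed

lemma mrank_delete_noncoloop:
  assumes "matroid E I" "\<not> is_coloop E I g"
  shows "mrank I (E - {g}) = mrank I E"
proof -
  obtain B where "B \<in> bases E I" "g \<notin> B" using assms(2) unfolding is_coloop_def by blast
  then have B: "B \<subseteq> E - {g}" "I B" "card B = mrank I E"
    using bases_iff_card[OF assms(1)] by auto
  have "card B \<le> mrank I (E - {g})" by (rule mrank_ge_card[OF assms(1) B(1,2)])
  moreover have "mrank I (E - {g}) \<le> mrank I E" by (rule mrank_mono[OF assms(1) Diff_subset])
  ultimately show ?thesis using B(3) by simp
qed

lemma indep_insert_iff_notin_mclosure:
  assumes "matroid E I" "I A" "g \<in> E" "g \<notin> A"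
  shows "I (insert g A) \<longleftrightarrow> g \<notin> mclosure E I A"
proof -
  have fin: "finite A" using matroid_indep_finite[OF assms(1,2)] .
  have rank_A: "mrank I A = card A" using indep_iff_mrank_eq_card[OF assms(1) fin] assms(2) by simp
  have "I (insert g A) \<longleftrightarrow> mrank I (insert g A) = Suc (mrank I A)"
    using indep_iff_mrank_eq_card[OF assms(1), of "insert g A"] fin assms(4) rank_A by simp
  also have "\<dots> \<longleftrightarrow> mrank I (insert g A) \<noteq> mrank I A"
    using mrank_mono[OF assms(1) subset_insertI, of A g] mrank_insert_le[OF assms(1), of g A] by auto
  also have "\<dots> \<longleftrightarrow> g \<notin> mclosure E I A"
    unfolding mclosure_def using assms(3) by simp
  finally show ?thesis .
qed

lemma mrank_insert_nonloop_bounds: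
  assumes "matroid E I" "I {g}" "g \<in> E" "A \<subseteq> E"
  shows "mrank I A \<le> mrank I (insert g A)" "mrank I (insert g A) \<le> Suc (mrank I A)"
    "mrank I (insert g A) \<le> mrank I E" "0 < mrank I (insert g A)"
proof -
  show "mrank I A \<le> mrank I (insert g A)" by (rule mrank_mono[OF assms(1) subset_insertI])
  show "mrank I (insert g A) \<le> Suc (mrank I A)" by (rule mrank_insert_le[OF assms(1)])
  show "mrank I (insert g A) \<le> mrank I E" using assms(3,4) by (intro mrank_mono[OF assms(1)]) blast
  have "card {g} \<le> mrank I (insert g A)" by (rule mrank_ge_card[OF assms(1) _ assms(2)]) simp
  then show "0 < mrank I (insert g A)" by simp
qed

lemma insert_indeps_iff:
  assumes "matroid E I" "g \<in> E" "g \<notin> A"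
  shows "insert g A \<in> indeps E I \<longleftrightarrow> A \<in> indeps E I \<and> g \<notin> mclosure E I A"
proof
  assume "insert g A \<in> indeps E I"
  then have "I (insert g A)" "A \<subseteq> E" unfolding indeps_def by auto
  moreover have "I A" using matroid_indep_mono[OF assms(1) \<open>I (insert g A)\<close>] by blast
  ultimately show "A \<in> indeps E I \<and> g \<notin> mclosure E I A"
    using indep_insert_iff_notin_mclosure[OF assms(1) _ assms(2,3)] unfolding indeps_def by blast
next
  assume "A \<in> indeps E I \<and> g \<notin> mclosure E I A"
  then show "insert g A \<in> indeps E I"
    using indep_insert_iff_notin_mclosure[OF assms(1) _ assms(2,3)] assms(2) unfolding indeps_def by blast
qed

lemma bases_maximal: "B \<in> bases E I \<Longrightarrow> X \<in> indeps E I \<Longrightarrow> B \<subseteq> X \<Longrightarrow> X = B"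
  unfolding bases_def indeps_def by blast

lemma bases_subset_indeps: "bases E I \<subseteq> indeps E I"
  unfolding bases_def indeps_def by blast

lemma spanning_insert:
  assumes "matroid E I" "g \<in> E" "A \<in> spanning E I"
  shows "insert g A \<in> spanning E I"
proof -
  have "A \<subseteq> E" "mrank I A = mrank I E" using assms(3) unfolding spanning_def by auto
  moreover have "mrank I A \<le> mrank I (insert g A)" "mrank I (insert g A) \<le> mrank I E"
    using mrank_mono[OF assms(1) subset_insertI] mrank_mono[OF assms(1)] assms(2) \<open>A \<subseteq> E\<close> by auto
  ultimately show ?thesis using assms(2) unfolding spanning_def by auto
qed

lemma families_subset_Pow: "indeps E I \<subseteq> Pow E" "bases E I \<subseteq> Pow E" "spanning E I \<subseteq> Pow E"
  unfolding indeps_def bases_def spanning_def by auto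

section \<open>Generating polynomials of set families\<close>

lemma Zgen_fun_upd:
  assumes "finite E" "Q \<subseteq> Pow E"
  shows "Zgen Q (y(g := t)) = Zgen {S \<in> Q. g \<notin> S} y + t * Zgen {S. g \<notin> S \<and> insert g S \<in> Q} y"
proof -
  let ?Q0 = "{S \<in> Q. g \<notin> S}" and ?Q1 = "{S. g \<notin> S \<and> insert g S \<in> Q}"
  have "?Q1 \<subseteq> Pow E" using assms(2) by auto
  then have fin: "finite Q" "finite ?Q1" "\<forall>S\<in>Q. finite S"
    using assms by (auto intro: finite_subset)
  have "S \<in> insert g ` ?Q1" if "S \<in> Q" "g \<in> S" for S
    using that by (intro image_eqI[of _ _ "S - {g}"]) (auto simp: insert_absorb)
  then have Q: "Q = ?Q0 \<union> insert g ` ?Q1" by auto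
  have "Zgen Q (y(g := t)) = (\<Sum>S\<in>?Q0. prod (y(g := t)) S) + (\<Sum>S\<in>insert g ` ?Q1. prod (y(g := t)) S)"
    unfolding Zgen_def by (subst Q, rule sum.union_disjoint) (use fin in auto)
  also have "(\<Sum>S\<in>?Q0. prod (y(g := t)) S) = Zgen ?Q0 y"
    unfolding Zgen_def by (intro sum.cong prod.cong) auto
  also have "(\<Sum>S\<in>insert g ` ?Q1. prod (y(g := t)) S) = (\<Sum>S\<in>?Q1. t * prod y S)"
  proof (subst sum.reindex)
    show "inj_on (insert g) ?Q1" by (rule inj_onI) (metis Diff_insert_absorb mem_Collect_eq)
    show "(\<Sum>S\<in>?Q1. (prod (y(g := t)) \<circ> insert g) S) = (\<Sum>S\<in>?Q1. t * prod y S)"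
    proof (intro sum.cong refl)
      fix S assume S: "S \<in> ?Q1"
      then have "finite S" using fin by auto
      with S show "(prod (y(g := t)) \<circ> insert g) S = t * prod y S"
        by (auto intro!: prod.cong)
    qed
  qed
  finally show ?thesis by (simp add: Zgen_def sum_distrib_left)
qed

lemma set_zero_Zgen:
  assumes "finite E" "Q \<subseteq> Pow E"
  shows "set_zero g (Zgen Q) y = Zgen {S \<in> Q. g \<notin> S} y"
  unfolding set_zero_def using Zgen_fun_upd[OF assms, of y g 0] by simp

lemma partial_Zgen:
  assumes "finite E" "Q \<subseteq> Pow E"
  shows "partial g (Zgen Q) y = Zgen {S. g \<notin> S \<and> insert g S \<in> Q} y"
proof -
  have "((\<lambda>t. Zgen Q (y(g := t))) has_real_derivative Zgen {S. g \<notin> S \<and> insert g S \<in> Q} y) (at (y g))"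
    unfolding Zgen_fun_upd[OF assms] by (auto intro!: derivative_eq_intros)
  then show ?thesis unfolding partial_def by (rule DERIV_imp_deriv)
qed

lemma Zgen_mult:
  assumes "finite P" "finite R"
  shows "Zgen P y * Zgen R y = (\<Sum>(A, B)\<in>P \<times> R. prod y A * prod y B)"
  unfolding Zgen_def by (simp add: sum_product sum.cartesian_product)

lemma Zgen_image_Un_pairs:
  assumes "finite X" "finite Y" "X \<inter> Y = {}" "R \<subseteq> Pow X \<times> Pow Y"
  shows "Zgen ((\<lambda>(A, B). A \<union> B) ` R) y = (\<Sum>(A, B)\<in>R. prod y A * prod y B)"
proof -
  have parts: "(A \<union> B) \<inter> X = A" "(A \<union> B) \<inter> Y = B" if "(A, B) \<in> R" for A B
    using that assms(3,4) by auto
  have "inj_on (\<lambda>(A, B). A \<union> B) R"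
    by (rule inj_onI) (metis (no_types, lifting) case_prod_beta parts prod.collapse)
  moreover have "prod y (A \<union> B) = prod y A * prod y B" if "(A, B) \<in> R" for A B
  proof -
    have "A \<subseteq> X" "B \<subseteq> Y" using that assms(4) by auto
    then show ?thesis using assms(1-3) by (intro prod.union_disjoint) (auto intro: finite_subset)
  qed
  ultimately show ?thesis
    unfolding Zgen_def by (subst sum.reindex) (auto intro!: sum.cong split: prod.splits)
qed

lemma family_eq_image_Un_pairs:
  assumes "NQ \<subseteq> Pow (tsum_ground EL EM g)" "R \<subseteq> Pow (EL - {g}) \<times> Pow (EM - {g})"
    and pairs: "\<And>A B. A \<subseteq> EL - {g} \<Longrightarrow> B \<subseteq> EM - {g} \<Longrightarrow> A \<union> B \<in> NQ \<longleftrightarrow> (A, B) \<in> R"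
  shows "NQ = (\<lambda>(A, B). A \<union> B) ` R"
proof
  show "NQ \<subseteq> (\<lambda>(A, B). A \<union> B) ` R"
  proof
    fix S assume "S \<in> NQ"
    then have S_eq: "S \<inter> EL \<union> S \<inter> EM = S"
      and parts: "S \<inter> EL \<subseteq> EL - {g}" "S \<inter> EM \<subseteq> EM - {g}"
      using assms(1) unfolding tsum_ground_def by auto
    with \<open>S \<in> NQ\<close> pairs[OF parts] have "(S \<inter> EL, S \<inter> EM) \<in> R" by simp
    then have "(\<lambda>(A, B). A \<union> B) (S \<inter> EL, S \<inter> EM) \<in> (\<lambda>(A, B). A \<union> B) ` R"
      by (rule imageI)
    then show "S \<in> (\<lambda>(A, B). A \<union> B) ` R"
      by (simp only: case_prod_conv S_eq)
  qed
  show "(\<lambda>(A, B). A \<union> B) ` R \<subseteq> NQ"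
  proof
    fix S assume "S \<in> (\<lambda>(A, B). A \<union> B) ` R"
    then obtain A B where AB: "(A, B) \<in> R" and S: "S = A \<union> B" by auto
    then have "A \<subseteq> EL - {g}" "B \<subseteq> EM - {g}" using assms(2) by auto
    with AB show "S \<in> NQ" unfolding S using pairs by blast
  qed
qed

lemma Zgen_glue:
  assumes "finite EL" "finite EM" "EL \<inter> EM = {g}"
    and "NQ \<subseteq> Pow (tsum_ground EL EM g)" "LQ \<subseteq> Pow EL" "MQ \<subseteq> Pow EM"
    and glue: "\<And>A B. A \<subseteq> EL - {g} \<Longrightarrow> B \<subseteq> EM - {g} \<Longrightarrow>
      A \<union> B \<in> NQ \<longleftrightarrow> (A \<in> LQ \<and> insert g B \<in> MQ) \<or> (insert g A \<in> LQ \<and> B \<in> MQ)"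
  shows "Zgen NQ y = set_zero g (Zgen LQ) y * partial g (Zgen MQ) y
      + partial g (Zgen LQ) y * set_zero g (Zgen MQ) y
      - Zgen {A \<in> LQ. g \<notin> A \<and> insert g A \<in> LQ} y * Zgen {B \<in> MQ. g \<notin> B \<and> insert g B \<in> MQ} y"
proof -
  define L0 where "L0 = {A \<in> LQ. g \<notin> A}"
  define L1 where "L1 = {A. g \<notin> A \<and> insert g A \<in> LQ}"
  define M0 where "M0 = {B \<in> MQ. g \<notin> B}"
  define M1 where "M1 = {B. g \<notin> B \<and> insert g B \<in> MQ}"
  note defs = L0_def L1_def M0_def M1_def
  have sub: "L0 \<union> L1 \<subseteq> Pow (EL - {g})" "M0 \<union> M1 \<subseteq> Pow (EM - {g})"
    using assms(5,6) unfolding defs by auto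
  then have fin: "finite L0" "finite L1" "finite M0" "finite M1"
    using assms(1,2) by (meson finite_Pow_iff finite_Diff finite_subset le_supE)+
  let ?R = "L0 \<times> M1 \<union> L1 \<times> M0"
  have R_sub: "?R \<subseteq> Pow (EL - {g}) \<times> Pow (EM - {g})" using sub by auto
  have "NQ = (\<lambda>(A, B). A \<union> B) ` ?R"
  proof (rule family_eq_image_Un_pairs[OF assms(4) R_sub])
    show "A \<union> B \<in> NQ \<longleftrightarrow> (A, B) \<in> ?R" if "A \<subseteq> EL - {g}" "B \<subseteq> EM - {g}" for A B
      using glue[OF that] that unfolding defs by auto
  qed
  moreover have "(EL - {g}) \<inter> (EM - {g}) = {}" using assms(3) by auto
  ultimately have "Zgen NQ y = (\<Sum>(A, B)\<in>?R. prod y A * prod y B)"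
    using Zgen_image_Un_pairs[OF _ _ _ R_sub] assms(1,2) by simp
  also have "\<dots> = Zgen L0 y * Zgen M1 y + Zgen L1 y * Zgen M0 y - Zgen (L0 \<inter> L1) y * Zgen (M0 \<inter> M1) y"
    using fin by (simp add: sum_Un Times_Int_Times Zgen_mult Int_commute[of M1])
  also have "\<dots> = set_zero g (Zgen LQ) y * partial g (Zgen MQ) y
      + partial g (Zgen LQ) y * set_zero g (Zgen MQ) y
      - Zgen {A \<in> LQ. g \<notin> A \<and> insert g A \<in> LQ} y * Zgen {B \<in> MQ. g \<notin> B \<and> insert g B \<in> MQ} y"
  proof -
    have "L0 \<inter> L1 = {A \<in> LQ. g \<notin> A \<and> insert g A \<in> LQ}" "M0 \<inter> M1 = {B \<in> MQ. g \<notin> B \<and> insert g B \<in> MQ}"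
      unfolding defs by auto
    moreover have "Zgen L0 y = set_zero g (Zgen LQ) y" "Zgen L1 y = partial g (Zgen LQ) y"
      "Zgen M0 y = set_zero g (Zgen MQ) y" "Zgen M1 y = partial g (Zgen MQ) y"
      using assms(1,2,5,6) unfolding defs by (simp_all add: set_zero_Zgen partial_Zgen)
    ultimately show ?thesis by (simp only:)
  qed
  finally show ?thesis .
qed

section \<open>The two-sum\<close>

lemma tsum_families_subset_Pow:
  "tsum_indeps EL IL EM IM g \<subseteq> Pow (tsum_ground EL EM g)"
  "tsum_bases EL IL EM IM g \<subseteq> Pow (tsum_ground EL EM g)"
  "tsum_spanning EL IL EM IM g \<subseteq> Pow (tsum_ground EL EM g)"
  unfolding tsum_indeps_def tsum_bases_def tsum_spanning_def by auto

lemma tsum_ground_eq: "tsum_ground EL EM g = (EL - {g}) \<union> (EM - {g})"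
  unfolding tsum_ground_def by blast

lemma tsum_rank_swap: "tsum_rank EM IM EL IL g = tsum_rank EL IL EM IM g"
proof
  fix S
  have "tsum_nu EM IM EL IL g S = tsum_nu EL IL EM IM g S"
    unfolding tsum_nu_def by meson
  then show "tsum_rank EM IM EL IL g S = tsum_rank EL IL EM IM g S"
    unfolding tsum_rank_def by (simp only: add.commute)
qed

lemma tsum_indeps_swap: "tsum_indeps EM IM EL IL g = tsum_indeps EL IL EM IM g"
proof -
  have "tsum_ground EM EL g = tsum_ground EL EM g" unfolding tsum_ground_def by (simp only: Un_commute)
  then show ?thesis unfolding tsum_indeps_def tsum_rank_swap[of EM IM EL IL] by (simp only:)
qed

lemma tsum_bases_swap: "tsum_bases EM IM EL IL g = tsum_bases EL IL EM IM g"
  unfolding tsum_bases_def tsum_indeps_swap[of EM IM EL IL] ..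

locale two_sum =
  fixes EL :: "'a set" and IL and EM :: "'a set" and IM and g :: 'a
  assumes matroid_L: "matroid EL IL" and matroid_M: "matroid EM IM"
    and ground_Int: "EL \<inter> EM = {g}"
    and nonloop_L: "\<not> is_loop IL g" and noncoloop_L: "\<not> is_coloop EL IL g"
    and nonloop_M: "\<not> is_loop IM g" and noncoloop_M: "\<not> is_coloop EM IM g"
begin

lemma swap: "two_sum EM IM EL IL g"
  by unfold_locales (use matroid_L matroid_M ground_Int nonloop_L noncoloop_L nonloop_M noncoloop_M in auto)

lemma g_in_grounds: "g \<in> EL" "g \<in> EM"
  using ground_Int by auto

lemma indep_g: "IL {g}" "IM {g}"
  using nonloop_L nonloop_M unfolding is_loop_def by auto

lemma Un_Int_grounds:
  assumes "A \<subseteq> EL - {g}" "B \<subseteq> EM - {g}"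
  shows "(A \<union> B) \<inter> EL = A" "(A \<union> B) \<inter> EM = B"
  using assms ground_Int by auto

lemma card_Un_parts:
  assumes "A \<subseteq> EL - {g}" "B \<subseteq> EM - {g}"
  shows "card (A \<union> B) = card A + card B"
proof (rule card_Un_disjoint)
  show "finite A" "finite B"
    using assms matroid_finite[OF matroid_L] matroid_finite[OF matroid_M] by (auto intro: finite_subset)
  show "A \<inter> B = {}" using assms ground_Int by auto
qed

lemma tsum_rank_Un:
  assumes "A \<subseteq> EL - {g}" "B \<subseteq> EM - {g}"
  shows "tsum_rank EL IL EM IM g (A \<union> B) = mrank IL A + mrank IM B -
    (if g \<in> mclosure EL IL A \<and> g \<in> mclosure EM IM B then 1 else 0)"
  unfolding tsum_rank_def tsum_nu_def Un_Int_grounds[OF assms] ..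

lemma tsum_indeps_Un_iff_mclosure:
  assumes A: "A \<subseteq> EL - {g}" and B: "B \<subseteq> EM - {g}"
  shows "A \<union> B \<in> tsum_indeps EL IL EM IM g \<longleftrightarrow>
    A \<in> indeps EL IL \<and> B \<in> indeps EM IM \<and> (g \<notin> mclosure EL IL A \<or> g \<notin> mclosure EM IM B)"
proof -
  have fin: "finite A" "finite B"
    using A B matroid_finite[OF matroid_L] matroid_finite[OF matroid_M] by (auto intro: finite_subset)
  have "A \<union> B \<subseteq> tsum_ground EL EM g" unfolding tsum_ground_eq using A B by blast
  then have "A \<union> B \<in> tsum_indeps EL IL EM IM g \<longleftrightarrow>
      mrank IL A + mrank IM B - (if g \<in> mclosure EL IL A \<and> g \<in> mclosure EM IM B then 1 else 0)
      = card A + card B"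
    unfolding tsum_indeps_def using tsum_rank_Un[OF A B] card_Un_parts[OF A B] by simp
  also have "\<dots> \<longleftrightarrow> mrank IL A = card A \<and> mrank IM B = card B \<and>
      (g \<notin> mclosure EL IL A \<or> g \<notin> mclosure EM IM B)"
  proof (cases "g \<in> mclosure EL IL A \<and> g \<in> mclosure EM IM B")
    case True
    have "A \<subseteq> EL" using A by blast
    then have "0 < mrank IL (insert g A)"
      by (rule mrank_insert_nonloop_bounds(4)[OF matroid_L indep_g(1) g_in_grounds(1)])
    \<comment> \<open>excludes the truncated subtraction \<open>0 - 1 = 0\<close>\<close>
    with True have "0 < mrank IL A" unfolding mclosure_def by simp
    with True show ?thesis
      using mrank_le_card[OF matroid_L fin(1)] mrank_le_card[OF matroid_M fin(2)] by simp
  next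
    case False
    then show ?thesis
      using mrank_le_card[OF matroid_L fin(1)] mrank_le_card[OF matroid_M fin(2)] by auto
  qed
  also have "\<dots> \<longleftrightarrow> A \<in> indeps EL IL \<and> B \<in> indeps EM IM \<and> (g \<notin> mclosure EL IL A \<or> g \<notin> mclosure EM IM B)"
    using A B unfolding indeps_def mem_Collect_eq indep_iff_mrank_eq_card[OF matroid_L fin(1)]
      indep_iff_mrank_eq_card[OF matroid_M fin(2)] by blast
  finally show ?thesis .
qed

lemma tsum_indeps_Un_iff:
  assumes A: "A \<subseteq> EL - {g}" and B: "B \<subseteq> EM - {g}"
  shows "A \<union> B \<in> tsum_indeps EL IL EM IM g \<longleftrightarrow>
    (A \<in> indeps EL IL \<and> insert g B \<in> indeps EM IM) \<or> (insert g A \<in> indeps EL IL \<and> B \<in> indeps EM IM)"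
proof -
  have "g \<notin> A" "g \<notin> B" using A B by blast+
  then show ?thesis
    unfolding tsum_indeps_Un_iff_mclosure[OF A B]
      insert_indeps_iff[OF matroid_L g_in_grounds(1) \<open>g \<notin> A\<close>]
      insert_indeps_iff[OF matroid_M g_in_grounds(2) \<open>g \<notin> B\<close>]
    by blast
qed

lemma tsum_rank_ground:
  "tsum_rank EL IL EM IM g (tsum_ground EL EM g) = mrank IL EL + mrank IM EM - 1"
proof -
  have "mrank IL (insert g (EL - {g})) = mrank IL (EL - {g})"
    "mrank IM (insert g (EM - {g})) = mrank IM (EM - {g})"
    using g_in_grounds mrank_delete_noncoloop[OF matroid_L noncoloop_L]
      mrank_delete_noncoloop[OF matroid_M noncoloop_M] by (simp_all add: insert_absorb)
  then have "g \<in> mclosure EL IL (EL - {g})" "g \<in> mclosure EM IM (EM - {g})"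
    unfolding mclosure_def using g_in_grounds by auto
  then show ?thesis
    unfolding tsum_ground_eq tsum_rank_Un[OF order_refl order_refl]
    using mrank_delete_noncoloop[OF matroid_L noncoloop_L] mrank_delete_noncoloop[OF matroid_M noncoloop_M]
    by simp
qed

lemma tsum_spanning_Un_iff:
  assumes A: "A \<subseteq> EL - {g}" and B: "B \<subseteq> EM - {g}"
  shows "A \<union> B \<in> tsum_spanning EL IL EM IM g \<longleftrightarrow>
    (A \<in> spanning EL IL \<and> insert g B \<in> spanning EM IM) \<or> (insert g A \<in> spanning EL IL \<and> B \<in> spanning EM IM)"
proof -
  have closure_iff: "g \<in> mclosure EL IL A \<longleftrightarrow> mrank IL (insert g A) = mrank IL A"
    "g \<in> mclosure EM IM B \<longleftrightarrow> mrank IM (insert g B) = mrank IM B"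
    unfolding mclosure_def using g_in_grounds by auto
  have "A \<subseteq> EL" "B \<subseteq> EM" using A B by blast+
  note bounds = mrank_insert_nonloop_bounds[OF matroid_L indep_g(1) g_in_grounds(1) \<open>A \<subseteq> EL\<close>]
    mrank_insert_nonloop_bounds[OF matroid_M indep_g(2) g_in_grounds(2) \<open>B \<subseteq> EM\<close>]
  have "A \<union> B \<subseteq> tsum_ground EL EM g" unfolding tsum_ground_eq using A B by blast
  then have "A \<union> B \<in> tsum_spanning EL IL EM IM g \<longleftrightarrow>
      mrank IL A + mrank IM B - (if g \<in> mclosure EL IL A \<and> g \<in> mclosure EM IM B then 1 else 0)
      = mrank IL EL + mrank IM EM - 1"
    unfolding tsum_spanning_def using tsum_rank_Un[OF A B] tsum_rank_ground by simp
  also have "\<dots> \<longleftrightarrow> (mrank IL A = mrank IL EL \<and> mrank IM (insert g B) = mrank IM EM) \<or>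
      (mrank IL (insert g A) = mrank IL EL \<and> mrank IM B = mrank IM EM)"
    unfolding closure_iff using bounds
    by (cases "mrank IL (insert g A) = mrank IL A"; cases "mrank IM (insert g B) = mrank IM B") auto
  also have "\<dots> \<longleftrightarrow> (A \<in> spanning EL IL \<and> insert g B \<in> spanning EM IM) \<or>
      (insert g A \<in> spanning EL IL \<and> B \<in> spanning EM IM)"
    unfolding spanning_def using A B g_in_grounds by auto
  finally show ?thesis .
qed

lemma tsum_bases_UnI:
  assumes A: "A \<subseteq> EL - {g}" and B: "B \<subseteq> EM - {g}"
    and bases: "A \<in> bases EL IL" "insert g B \<in> bases EM IM"
  shows "A \<union> B \<in> tsum_bases EL IL EM IM g"
  unfolding tsum_bases_def
proof (intro CollectI conjI ballI impI)
  show "A \<union> B \<in> tsum_indeps EL IL EM IM g"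
    using bases bases_subset_indeps tsum_indeps_Un_iff[OF A B] by blast
  fix X assume X: "X \<in> tsum_indeps EL IL EM IM g" and sub: "A \<union> B \<subseteq> X"
  define A' B' where "A' = X \<inter> EL" and "B' = X \<inter> EM"
  have "X \<subseteq> tsum_ground EL EM g" using X unfolding tsum_indeps_def by blast
  then have parts: "A' \<subseteq> EL - {g}" "B' \<subseteq> EM - {g}" and X_eq: "X = A' \<union> B'"
    unfolding A'_def B'_def tsum_ground_eq by blast+
  have "A \<subseteq> A'" "B \<subseteq> B'" using sub A B unfolding A'_def B'_def by blast+
  from X consider "A' \<in> indeps EL IL" "insert g B' \<in> indeps EM IM"
    | "insert g A' \<in> indeps EL IL" "B' \<in> indeps EM IM"
    unfolding X_eq tsum_indeps_Un_iff[OF parts] by blast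
  then show "X = A \<union> B"
  proof cases
    case 1
    then have "A' = A" "insert g B' = insert g B"
      using bases_maximal bases \<open>A \<subseteq> A'\<close> \<open>B \<subseteq> B'\<close> by blast+
    then show ?thesis using parts B unfolding X_eq by blast
  next
    case 2
    then have "insert g A' = A" using bases_maximal bases \<open>A \<subseteq> A'\<close> by blast
    then show ?thesis using A by blast
  qed
qed

lemma tsum_bases_parts:
  assumes A: "A \<subseteq> EL - {g}" and B: "B \<subseteq> EM - {g}"
    and basis: "A \<union> B \<in> tsum_bases EL IL EM IM g"
    and indeps: "A \<in> indeps EL IL" "insert g B \<in> indeps EM IM"
  shows "A \<in> bases EL IL \<and> insert g B \<in> bases EM IM"
proof -
  obtain A' where A': "A' \<in> bases EL IL" "A \<subseteq> A'" "A' \<subseteq> EL - {g}"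
    using indep_extend_to_basis[OF matroid_L _ A] indeps(1)
      mrank_delete_noncoloop[OF matroid_L noncoloop_L] unfolding indeps_def by blast
  obtain M' where M': "M' \<in> bases EM IM" "insert g B \<subseteq> M'"
    using indep_extend_to_basis[OF matroid_M _ _ order_refl refl, of "insert g B"] indeps(2)
    unfolding indeps_def by blast
  define B' where "B' = M' - {g}"
  have B': "B' \<subseteq> EM - {g}" "B \<subseteq> B'" "insert g B' = M'"
    using M' B bases_iff_card[OF matroid_M] unfolding B'_def by auto
  have "A' \<union> B' \<in> tsum_indeps EL IL EM IM g"
    using tsum_indeps_Un_iff[OF A'(3) B'(1)] A'(1) M'(1) B'(3) bases_subset_indeps by blast
  moreover have "A \<union> B \<subseteq> A' \<union> B'" using A'(2) B'(2) by blast
  ultimately have "A' \<union> B' = A \<union> B" using basis unfolding tsum_bases_def by blast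
  then have "A' = A" "B' = B"
    using Un_Int_grounds[OF A'(3) B'(1)] Un_Int_grounds[OF A B] by metis+
  then show ?thesis using A'(1) M'(1) B'(3) by simp
qed

lemma tsum_bases_Un_iff:
  assumes A: "A \<subseteq> EL - {g}" and B: "B \<subseteq> EM - {g}"
  shows "A \<union> B \<in> tsum_bases EL IL EM IM g \<longleftrightarrow>
    (A \<in> bases EL IL \<and> insert g B \<in> bases EM IM) \<or> (insert g A \<in> bases EL IL \<and> B \<in> bases EM IM)"
proof -
  interpret swapped: two_sum EM IM EL IL g by (rule swap)
  have swap_bases: "B \<union> A \<in> tsum_bases EM IM EL IL g \<longleftrightarrow> A \<union> B \<in> tsum_bases EL IL EM IM g"
    by (simp add: tsum_bases_swap Un_commute)
  show ?thesis
  proof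
    assume basis: "A \<union> B \<in> tsum_bases EL IL EM IM g"
    then have "A \<union> B \<in> tsum_indeps EL IL EM IM g" unfolding tsum_bases_def by blast
    then consider "A \<in> indeps EL IL" "insert g B \<in> indeps EM IM"
      | "insert g A \<in> indeps EL IL" "B \<in> indeps EM IM"
      unfolding tsum_indeps_Un_iff[OF A B] by blast
    then show "(A \<in> bases EL IL \<and> insert g B \<in> bases EM IM) \<or> (insert g A \<in> bases EL IL \<and> B \<in> bases EM IM)"
      using tsum_bases_parts[OF A B basis] swapped.tsum_bases_parts[OF B A basis[folded swap_bases]]
      by cases blast+
  next
    assume "(A \<in> bases EL IL \<and> insert g B \<in> bases EM IM) \<or> (insert g A \<in> bases EL IL \<and> B \<in> bases EM IM)"
    then show "A \<union> B \<in> tsum_bases EL IL EM IM g"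
      using tsum_bases_UnI[OF A B] swapped.tsum_bases_UnI[OF B A] swap_bases by blast
  qed
qed

lemma Zgen_tsum_bases:
  "Zgen (tsum_bases EL IL EM IM g) y =
     set_zero g (Zgen (bases EL IL)) y * partial g (Zgen (bases EM IM)) y
   + partial g (Zgen (bases EL IL)) y * set_zero g (Zgen (bases EM IM)) y"
proof -
  have "{A \<in> bases EL IL. g \<notin> A \<and> insert g A \<in> bases EL IL} = {}"
    using bases_maximal[of _ EL IL] bases_subset_indeps by blast
  with Zgen_glue[OF matroid_finite[OF matroid_L] matroid_finite[OF matroid_M] ground_Int
      tsum_families_subset_Pow(2) families_subset_Pow(2) families_subset_Pow(2) tsum_bases_Un_iff]
  show ?thesis by (simp add: Zgen_def)
qed

lemma Zgen_tsum_indeps: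
  "Zgen (tsum_indeps EL IL EM IM g) y =
     set_zero g (Zgen (indeps EL IL)) y * partial g (Zgen (indeps EM IM)) y
   + partial g (Zgen (indeps EL IL)) y * set_zero g (Zgen (indeps EM IM)) y
   - partial g (Zgen (indeps EL IL)) y * partial g (Zgen (indeps EM IM)) y"
proof -
  have "{A \<in> indeps EL IL. g \<notin> A \<and> insert g A \<in> indeps EL IL} = {A. g \<notin> A \<and> insert g A \<in> indeps EL IL}"
    "{B \<in> indeps EM IM. g \<notin> B \<and> insert g B \<in> indeps EM IM} = {B. g \<notin> B \<and> insert g B \<in> indeps EM IM}"
    using insert_indeps_iff[OF matroid_L g_in_grounds(1)] insert_indeps_iff[OF matroid_M g_in_grounds(2)]
    by blast+
  with Zgen_glue[OF matroid_finite[OF matroid_L] matroid_finite[OF matroid_M] ground_Int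
      tsum_families_subset_Pow(1) families_subset_Pow(1) families_subset_Pow(1) tsum_indeps_Un_iff]
  show ?thesis
    by (simp add: partial_Zgen[OF matroid_finite[OF matroid_L] families_subset_Pow(1)]
        partial_Zgen[OF matroid_finite[OF matroid_M] families_subset_Pow(1)])
qed

lemma Zgen_tsum_spanning:
  "Zgen (tsum_spanning EL IL EM IM g) y =
     set_zero g (Zgen (spanning EL IL)) y * partial g (Zgen (spanning EM IM)) y
   + partial g (Zgen (spanning EL IL)) y * set_zero g (Zgen (spanning EM IM)) y
   - set_zero g (Zgen (spanning EL IL)) y * set_zero g (Zgen (spanning EM IM)) y"
proof -
  have "{A \<in> spanning EL IL. g \<notin> A \<and> insert g A \<in> spanning EL IL} = {A \<in> spanning EL IL. g \<notin> A}"
    "{B \<in> spanning EM IM. g \<notin> B \<and> insert g B \<in> spanning EM IM} = {B \<in> spanning EM IM. g \<notin> B}"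
    using spanning_insert[OF matroid_L g_in_grounds(1)] spanning_insert[OF matroid_M g_in_grounds(2)]
    by blast+
  with Zgen_glue[OF matroid_finite[OF matroid_L] matroid_finite[OF matroid_M] ground_Int
      tsum_families_subset_Pow(3) families_subset_Pow(3) families_subset_Pow(3) tsum_spanning_Un_iff]
  show ?thesis
    by (simp add: set_zero_Zgen[OF matroid_finite[OF matroid_L] families_subset_Pow(3)]
        set_zero_Zgen[OF matroid_finite[OF matroid_M] families_subset_Pow(3)])
qed

end

theorem corollary5p7:
  fixes EL EM :: "'a set" and IL IM :: "'a set \<Rightarrow> bool" and g :: 'a
  assumes "matroid EL IL" and "matroid EM IM"
    and "EL \<inter> EM = {g}"
    and "\<not> is_loop IL g" and "\<not> is_coloop EL IL g"
    and "\<not> is_loop IM g" and "\<not> is_coloop EM IM g"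
  shows
    "(let N = Zgen (tsum_bases EL IL EM IM g); L = Zgen (bases EL IL); M = Zgen (bases EM IM)
      in \<forall>y. N y = set_zero g L y * partial g M y + partial g L y * set_zero g M y)
   \<and> (let N = Zgen (tsum_indeps EL IL EM IM g); L = Zgen (indeps EL IL); M = Zgen (indeps EM IM)
      in \<forall>y. N y = set_zero g L y * partial g M y + partial g L y * set_zero g M y
                   - partial g L y * partial g M y)
   \<and> (let N = Zgen (tsum_spanning EL IL EM IM g); L = Zgen (spanning EL IL); M = Zgen (spanning EM IM)
      in \<forall>y. N y = set_zero g L y * partial g M y + partial g L y * set_zero g M y
                   - set_zero g L y * set_zero g M y)"
proof -
  interpret two_sum EL IL EM IM g
    by unfold_locales (fact assms)+
  show ?thesis
    unfolding Let_def using Zgen_tsum_bases Zgen_tsum_indeps Zgen_tsum_spanning by blast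
qed

end
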